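(* Let $G\in\mathcal{G}_{\Sigma,\Delta,\pi}$, $r\ge0$, $v\in V(G)$, and write $G^r_v=(H,v)$. Then for every disk $(H',v)\in\mathcal{D}^r_{\Sigma,\Delta,\pi}$ with $H'\subseteq G$, we have $H'\subseteq H$.
   Context: Fix an uncountably infinite set $\mathcal{V}$, sets $\Sigma,\Delta$, finite $\pi$. A graph $G$: countable $V(G)\subset\mathcal{V}$; a set $E(G)$ of pairwise disjoint two-element subsets of $V(G)\times\pi$; partial labelings $\sigma(G):V(G)\rightharpoonup\Sigma$, $\delta(G):E(G)\rightharpoonup\Delta$; $\mathcal{G}_{\Sigma,\Delta,\pi}$ the set of graphs. $G\subseteq H$: componentwise inclusion of $V,E,\sigma,\delta$ (partial functions as sets of pairs). $d_G$ shortest-path distance, $B_G(c,r)=\{u\mid d_G(c,u)\le r\}$. Disk $G^r_c=(H,c)$: $V(H)=B_G(c,r+1)$, $E(H)=\{\{u\!:\!i,v\!:\!j\}\in E(G)\mid\{u,v\}\cap B_G(c,r)\ne\emptyset\}$, $\sigma(H)=\sigma(G)|_{B_G(c,r)}$, $\delta(H)=\delta(G)|_{E(H)}$. $\mathcal{D}^r_{\Sigma,\Delta,\pi}$ is the set of all pointed graphs of the form $K^r_c$ for some graph $K$ and $c\in V(K)$. *)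

theory Defs
  imports "HOL-Library.Countable_Set" "HOL-Library.Extended_Nat"
begin

text \<open>Graphs over vertex universe 'v (the uncountable set V), vertex labels 's (Sigma),
edge labels 'd (Delta), ports 'p (the finite set pi).\<close>

record ('v, 's, 'd, 'p) graph =
  verts :: "'v set"
  edges :: "('v \<times> 'p) set set"
  vlab  :: "'v \<rightharpoonup> 's"
  elab  :: "('v \<times> 'p) set \<rightharpoonup> 'd"

definition is_graph :: "('v, 's, 'd, 'p) graph \<Rightarrow> bool" where
  "is_graph G \<longleftrightarrow>
     countable (verts G) \<and>
     (\<forall>e \<in> edges G. e \<subseteq> verts G \<times> UNIV \<and> card e = 2) \<and>
     (\<forall>e \<in> edges G. \<forall>e' \<in> edges G. e \<noteq> e' \<longrightarrow> e \<inter> e' = {}) \<and>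
     dom (vlab G) \<subseteq> verts G \<and>
     dom (elab G) \<subseteq> edges G"

definition subgraph :: "('v, 's, 'd, 'p) graph \<Rightarrow> ('v, 's, 'd, 'p) graph \<Rightarrow> bool" where
  "subgraph G H \<longleftrightarrow>
     verts G \<subseteq> verts H \<and> edges G \<subseteq> edges H \<and>
     vlab G \<subseteq>\<^sub>m vlab H \<and> elab G \<subseteq>\<^sub>m elab H"

definition adj :: "('v, 's, 'd, 'p) graph \<Rightarrow> ('v \<times> 'v) set" where
  "adj G = {(u, v). \<exists>i j. {(u, i), (v, j)} \<in> edges G}"

text \<open>Shortest-path distance (infinite if unreachable).\<close>
definition gdist :: "('v, 's, 'd, 'p) graph \<Rightarrow> 'v \<Rightarrow> 'v \<Rightarrow> enat" where
  "gdist G c u = (INF k \<in> {k. (c, u) \<in> (adj G) ^^ k}. enat k)"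

definition ball :: "('v, 's, 'd, 'p) graph \<Rightarrow> 'v \<Rightarrow> nat \<Rightarrow> 'v set" where
  "ball G c r = {u \<in> verts G. gdist G c u \<le> enat r}"

definition disk :: "('v, 's, 'd, 'p) graph \<Rightarrow> nat \<Rightarrow> 'v \<Rightarrow> ('v, 's, 'd, 'p) graph \<times> 'v" where
  "disk G r c =
     (let EH = {e \<in> edges G. \<exists>(u, i) \<in> e. u \<in> ball G c r} in
      (\<lparr> verts = ball G c (r + 1),
         edges = EH,
         vlab = vlab G |` ball G c r,
         elab = elab G |` EH \<rparr>, c))"

definition disks :: "nat \<Rightarrow> (('v, 's, 'd, 'p) graph \<times> 'v) set" where
  "disks r = {disk K r c | K c. is_graph K \<and> c \<in> verts K}"

end

theory Submission
  imports Defs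
begin

text \<open>Write \<open>H' = K\<^sup>r\<^sub>v\<close>. A walk in \<open>K\<close> from \<open>v\<close> of length at most \<open>r + 1\<close> leaves every
  vertex at distance at most \<open>r\<close> from \<open>v\<close>, so each of its edges lies in \<open>H' \<subseteq> G\<close>. Hence
  the \<open>s\<close>-balls around \<open>v\<close> in \<open>K\<close> lie in those of \<open>G\<close> for \<open>s \<le> r + 1\<close>, and every
  component of \<open>H'\<close>, being cut out of \<open>G\<close> by these balls, lies in the corresponding
  component of \<open>G\<^sup>r\<^sub>v\<close>.\<close>

lemma gdist_le_enat_iff:
  "gdist G c u \<le> enat s \<longleftrightarrow> (\<exists>k\<le>s. (c, u) \<in> adj G ^^ k)"
proof
  assume "\<exists>k\<le>s. (c, u) \<in> adj G ^^ k"
  then obtain k where "k \<le> s" "(c, u) \<in> adj G ^^ k" by blast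
  then have "gdist G c u \<le> enat k" unfolding gdist_def by (auto intro: INF_lower)
  with \<open>k \<le> s\<close> show "gdist G c u \<le> enat s" by (meson enat_ord_simps(1) order_trans)
next
  assume le: "gdist G c u \<le> enat s"
  show "\<exists>k\<le>s. (c, u) \<in> adj G ^^ k"
  proof (rule ccontr)
    assume "\<not> ?thesis"
    then have "enat (Suc s) \<le> gdist G c u" unfolding gdist_def
      by (auto intro!: INF_greatest simp: not_le Suc_le_eq)
    with le show False by (meson enat_ord_simps(2) lessI linorder_not_le order_trans)
  qed
qed

lemma in_ball_if_relpow_adj:
  "u \<in> verts G \<Longrightarrow> (c, u) \<in> adj G ^^ k \<Longrightarrow> k \<le> s \<Longrightarrow> u \<in> ball G c s"
  unfolding ball_def gdist_le_enat_iff by auto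

lemma is_graph_edge_vertex_in_verts:
  "is_graph G \<Longrightarrow> e \<in> edges G \<Longrightarrow> (u, i) \<in> e \<Longrightarrow> u \<in> verts G"
  unfolding is_graph_def by (metis SigmaE fst_conv subsetD)

lemma disk_components:
  "verts (fst (disk G r c)) = ball G c (r + 1)"
  "edges (fst (disk G r c)) = {e \<in> edges G. \<exists>(u, i) \<in> e. u \<in> ball G c r}"
  "vlab (fst (disk G r c)) = vlab G |` ball G c r"
  "elab (fst (disk G r c)) = elab G |` {e \<in> edges G. \<exists>(u, i) \<in> e. u \<in> ball G c r}"
  "snd (disk G r c) = c"
  by (simp_all add: disk_def Let_def)

lemma relpow_adj_transfer_disk:
  assumes K: "is_graph K" and edges_sub: "edges (fst (disk K r c)) \<subseteq> edges G"
  shows "k \<le> Suc r \<Longrightarrow> (c, u) \<in> adj K ^^ k \<Longrightarrow> (c, u) \<in> adj G ^^ k"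
proof (induction k arbitrary: u)
  case 0
  then show ?case by simp
next
  case (Suc k)
  from Suc.prems(2) obtain w where walk: "(c, w) \<in> adj K ^^ k" and "(w, u) \<in> adj K"
    by (rule relpow_Suc_E)
  then obtain i j where e: "{(w, i), (u, j)} \<in> edges K" unfolding adj_def by auto
  have "w \<in> verts K" using is_graph_edge_vertex_in_verts[OF K e, of w i] by simp
  moreover have "k \<le> r" using Suc.prems(1) by simp
  ultimately have "w \<in> ball K c r" by (rule in_ball_if_relpow_adj[OF _ walk])
  with e have "{(w, i), (u, j)} \<in> edges (fst (disk K r c))"
    unfolding disk_components by auto
  with edges_sub have "{(w, i), (u, j)} \<in> edges G" by (rule subsetD)
  then have "(w, u) \<in> adj G" unfolding adj_def by blast
  moreover have "(c, w) \<in> adj G ^^ k" using Suc.IH[OF _ walk] Suc.prems(1) by simp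
  ultimately show ?case by (blast intro: relpow_Suc_I)
qed

lemma ball_subset_if_disk_subgraph:
  assumes K: "is_graph K" and sub: "subgraph (fst (disk K r c)) G" and "s \<le> Suc r"
  shows "ball K c s \<subseteq> ball G c s"
proof
  fix u assume u: "u \<in> ball K c s"
  then obtain k where "k \<le> s" and walk: "(c, u) \<in> adj K ^^ k"
    unfolding ball_def gdist_le_enat_iff by blast
  have edges_sub: "edges (fst (disk K r c)) \<subseteq> edges G" using sub by (simp add: subgraph_def)
  have "u \<in> ball K c (r + 1)"
    using u \<open>s \<le> Suc r\<close> unfolding ball_def by (auto intro: order_trans)
  then have "u \<in> verts G" using sub unfolding subgraph_def disk_components by blast
  moreover have "(c, u) \<in> adj G ^^ k"
    using relpow_adj_transfer_disk[OF K edges_sub] \<open>k \<le> s\<close> \<open>s \<le> Suc r\<close> walk by simp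
  ultimately show "u \<in> ball G c s" using \<open>k \<le> s\<close> by (rule in_ball_if_relpow_adj)
qed

lemma map_le_restrict_mapI: "f \<subseteq>\<^sub>m g \<Longrightarrow> dom f \<subseteq> A \<Longrightarrow> f \<subseteq>\<^sub>m g |` A"
  by (auto simp: map_le_def)

lemma disk_subgraph_disk:
  assumes K: "is_graph K" and sub: "subgraph (fst (disk K r c)) G"
  shows "subgraph (fst (disk K r c)) (fst (disk G r c))"
proof -
  have ball_r: "ball K c r \<subseteq> ball G c r" and ball_Suc_r: "ball K c (r + 1) \<subseteq> ball G c (r + 1)"
    using ball_subset_if_disk_subgraph[OF K sub] by simp_all
  have "verts (fst (disk K r c)) \<subseteq> verts (fst (disk G r c))"
    using ball_Suc_r by (simp add: disk_components)
  moreover have edges_sub: "edges (fst (disk K r c)) \<subseteq> edges (fst (disk G r c))"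
    using sub ball_r unfolding subgraph_def disk_components by blast
  moreover have "vlab (fst (disk K r c)) \<subseteq>\<^sub>m vlab (fst (disk G r c))"
  proof -
    have "dom (vlab (fst (disk K r c))) \<subseteq> ball G c r"
      using ball_r by (auto simp: disk_components)
    with sub show ?thesis
      unfolding subgraph_def disk_components(3)[of G] by (blast intro: map_le_restrict_mapI)
  qed
  moreover have "elab (fst (disk K r c)) \<subseteq>\<^sub>m elab (fst (disk G r c))"
  proof -
    have "dom (elab (fst (disk K r c))) \<subseteq> edges (fst (disk G r c))"
      using edges_sub by (auto simp: disk_components)
    with sub show ?thesis
      unfolding subgraph_def disk_components(4)[of G] disk_components(2)[of G]
      by (blast intro: map_le_restrict_mapI)
  qed
  ultimately show ?thesis unfolding subgraph_def by (intro conjI)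
qed

theorem lemma2p5:
  fixes G H H' :: "('v, 's, 'd, 'p) graph" and r :: nat and v :: 'v
  assumes "uncountable (UNIV :: 'v set)"
    and "finite (UNIV :: 'p set)"
    and "is_graph G"
    and "v \<in> verts G"
    and "disk G r v = (H, v)"
    and "(H', v) \<in> disks r"
    and "subgraph H' G"
  shows "subgraph H' H"
proof -
  from assms(6) obtain K c where K: "is_graph K" and H'_disk: "(H', v) = disk K r c"
    unfolding disks_def by blast
  then have "c = v" by (metis disk_components(5) snd_conv)
  with H'_disk have H': "H' = fst (disk K r v)" by (metis fst_conv)
  have H: "H = fst (disk G r v)" using assms(5) by (metis fst_conv)
  show ?thesis
    using disk_subgraph_disk[OF K] assms(7) unfolding H H' .
qed

end
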